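(* Let $l>0$. For each $d\ge1$ let $Z_1,Z_2\sim\mathcal{N}(0,1)$ and $Z_x\sim\mathcal{N}_d(0,I_d)$ be random variables on a common probability space, not necessarily independent. Then, uniformly over all $\alpha\in[0,\infty)$, $$\lim_{d\to\infty}\Big(\mathbb{E}\big[Z_2\,\{1\wedge\exp(-l\alpha Z_1-l^2\lVert Z_x\rVert^2/(2d))\}\big]-\mathbb{E}\big[Z_2\,\{1\wedge\exp(-l\alpha Z_1-l^2/2)\}\big]\Big)=0.$$ *)

theory Defs
  imports "HOL-Probability.Probability"
begin

definition std_normal_measure :: "real measure" where
  "std_normal_measure = density lborel (\<lambda>x. ennreal (std_normal_density x))"

text \<open>The d-dimensional standard normal N_d(0, I_d), as a measure on functions
  {..<d} -> real (extensional), i.e. the product of d copies of N(0,1).\<close>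
definition std_normal_vec_measure :: "nat \<Rightarrow> (nat \<Rightarrow> real) measure" where
  "std_normal_vec_measure d = PiM {..<d} (\<lambda>_. std_normal_measure)"

end

theory Submission
  imports Defs
begin

text \<open>The map \<open>t \<mapsto> min 1 (exp t)\<close> is 1-Lipschitz, so the two integrands differ by at most
  \<open>\<bar>Z\<^sub>2\<bar> \<cdot> (l\<^sup>2/2) \<cdot> \<bar>Y\<bar>\<close> with \<open>Y = \<parallel>Z\<^sub>x\<parallel>\<^sup>2/d - 1\<close>, whatever \<open>\<alpha>\<close> and \<open>Z\<^sub>1\<close> are.
  Young's inequality \<open>u v \<le> (\<delta> u\<^sup>2 + v\<^sup>2/\<delta>)/2\<close> bounds this by second moments only:
  \<open>E Z\<^sub>2\<^sup>2 = 1\<close>, and \<open>E Y\<^sup>2 = 2/d\<close> is the variance of a chi-square variable with \<open>d\<close> degrees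
  of freedom divided by \<open>d\<^sup>2\<close>. Hence the difference of expectations is at most
  \<open>\<delta>/2 + l\<^sup>4/(4 \<delta> d)\<close> for every \<open>\<delta> > 0\<close>, uniformly in \<open>\<alpha>\<close> and in the joint law of the variables.\<close>

lemma sets_std_normal_measure [measurable_cong, simp]: "sets std_normal_measure = sets borel"
  unfolding std_normal_measure_def by simp

lemma prob_space_std_normal_measure: "prob_space std_normal_measure"
  unfolding std_normal_measure_def using prob_space_normal_density by simp

lemma integrable_std_normal_measure_power: "integrable std_normal_measure (\<lambda>x. x ^ k)"
  unfolding std_normal_measure_def using integrable_std_normal_moment[of k]
  by (subst integrable_density) simp_all

lemma integral_std_normal_measure_power:
  "integral\<^sup>L std_normal_measure (\<lambda>x. x ^ k) = integral\<^sup>L lborel (\<lambda>x. std_normal_density x * x ^ k)"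
  unfolding std_normal_measure_def by (simp add: integral_density)

lemma integral_std_normal_square: "integral\<^sup>L std_normal_measure (\<lambda>x. x\<^sup>2) = 1"
  using integral_std_normal_moment_even[of 1] by (simp add: integral_std_normal_measure_power)

lemma
  shows integrable_std_normal_square_minus_one:
      "integrable std_normal_measure (\<lambda>x. x\<^sup>2 - 1)"
    and integrable_std_normal_square_minus_one_squared:
      "integrable std_normal_measure (\<lambda>x. (x\<^sup>2 - 1)\<^sup>2)"
    and integral_std_normal_square_minus_one:
      "integral\<^sup>L std_normal_measure (\<lambda>x. x\<^sup>2 - 1) = 0"
    and integral_std_normal_square_minus_one_squared:
      "integral\<^sup>L std_normal_measure (\<lambda>x. (x\<^sup>2 - 1)\<^sup>2) = 2"
proof -
  interpret prob_space std_normal_measure by (rule prob_space_std_normal_measure)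
  have moment4: "integral\<^sup>L std_normal_measure (\<lambda>x. x ^ 4) = 3"
    using integral_std_normal_moment_even[of 2]
    by (simp add: integral_std_normal_measure_power fact_numeral)
  have expand: "(x\<^sup>2 - 1)\<^sup>2 = x ^ 4 - 2 * x\<^sup>2 + 1" for x :: real
    by (simp add: power2_eq_square power4_eq_xxxx algebra_simps)
  show "integrable std_normal_measure (\<lambda>x. x\<^sup>2 - 1)"
    and "integrable std_normal_measure (\<lambda>x. (x\<^sup>2 - 1)\<^sup>2)"
    unfolding expand using integrable_std_normal_measure_power by simp_all
  show "integral\<^sup>L std_normal_measure (\<lambda>x. x\<^sup>2 - 1) = 0"
    using integral_std_normal_square integrable_std_normal_measure_power by (simp add: prob_space)
  show "integral\<^sup>L std_normal_measure (\<lambda>x. (x\<^sup>2 - 1)\<^sup>2) = 2"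
    unfolding expand using integral_std_normal_square moment4 integrable_std_normal_measure_power
    by (simp add: prob_space)
qed

text \<open>The square of the sum is expanded into products \<open>g (x i) * g (x j)\<close>, each written as a
  product over all coordinates so that Fubini for product measures applies; the mixed terms
  vanish because \<open>g\<close> is centred.\<close>

lemma (in prob_space) product_integral_sum_centered_squared:
  fixes g :: "'a \<Rightarrow> real"
  assumes "finite I" and g: "integrable M g" "integrable M (\<lambda>x. (g x)\<^sup>2)" "integral\<^sup>L M g = 0"
  shows "integrable (PiM I (\<lambda>_. M)) (\<lambda>x. (\<Sum>i\<in>I. g (x i))\<^sup>2)"
    and "integral\<^sup>L (PiM I (\<lambda>_. M)) (\<lambda>x. (\<Sum>i\<in>I. g (x i))\<^sup>2) = card I * integral\<^sup>L M (\<lambda>x. (g x)\<^sup>2)"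
proof -
  interpret product_sigma_finite "\<lambda>_. M"
    by (simp add: product_sigma_finite_def prob_space_axioms prob_space_imp_sigma_finite)
  define f where "f i j k = (\<lambda>t. (if k = i then g t else 1) * (if k = j then g t else 1))"
    for i j k :: 'b
  have f_prod: "(\<Prod>k\<in>I. f i j k (x k)) = g (x i) * g (x j)" if "i \<in> I" "j \<in> I" for i j x
    using that \<open>finite I\<close> unfolding f_def prod.distrib by (simp add: prod.delta)
  have square: "(\<Sum>i\<in>I. g (x i))\<^sup>2 = (\<Sum>i\<in>I. \<Sum>j\<in>I. \<Prod>k\<in>I. f i j k (x k))" for x
    by (simp add: power2_eq_square sum_product f_prod)
  have f_integrable: "integrable M (f i j k)" for i j k
    using g by (cases "k = i"; cases "k = j") (simp_all add: f_def power2_eq_square)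
  have f_integral: "integral\<^sup>L M (f i j k) = (if k = i \<and> k = j then integral\<^sup>L M (\<lambda>x. (g x)\<^sup>2)
      else if k = i \<or> k = j then 0 else 1)" for i j k
    using g by (cases "k = i"; cases "k = j") (simp_all add: f_def power2_eq_square prob_space)
  have term_integrable: "integrable (PiM I (\<lambda>_. M)) (\<lambda>x. \<Prod>k\<in>I. f i j k (x k))" for i j
    using \<open>finite I\<close> f_integrable by (rule product_integrable_prod)
  have term_integral: "integral\<^sup>L (PiM I (\<lambda>_. M)) (\<lambda>x. \<Prod>k\<in>I. f i j k (x k))
      = (if i = j then integral\<^sup>L M (\<lambda>x. (g x)\<^sup>2) else 0)" if "i \<in> I" "j \<in> I" for i j
  proof -
    have "integral\<^sup>L (PiM I (\<lambda>_. M)) (\<lambda>x. \<Prod>k\<in>I. f i j k (x k)) = (\<Prod>k\<in>I. integral\<^sup>L M (f i j k))"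
      using \<open>finite I\<close> f_integrable by (rule product_integral_prod)
    also have "\<dots> = (if i = j then integral\<^sup>L M (\<lambda>x. (g x)\<^sup>2) else 0)"
    proof (cases "i = j")
      case True
      then have "integral\<^sup>L M (f i j k) = (if k = i then integral\<^sup>L M (\<lambda>x. (g x)\<^sup>2) else 1)" for k
        by (simp add: f_integral)
      then show ?thesis using True that \<open>finite I\<close> by (simp add: prod.delta)
    next
      case False
      then have "integral\<^sup>L M (f i j i) = 0" by (simp add: f_integral)
      then show ?thesis using False that \<open>finite I\<close> by (auto intro: prod_zero)
    qed
    finally show ?thesis .
  qed
  show "integrable (PiM I (\<lambda>_. M)) (\<lambda>x. (\<Sum>i\<in>I. g (x i))\<^sup>2)"
    unfolding square using term_integrable by auto
  show "integral\<^sup>L (PiM I (\<lambda>_. M)) (\<lambda>x. (\<Sum>i\<in>I. g (x i))\<^sup>2) = card I * integral\<^sup>L M (\<lambda>x. (g x)\<^sup>2)"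
    unfolding square using term_integrable term_integral \<open>finite I\<close>
    by (simp add: Bochner_Integration.integral_sum sum.delta)
qed

lemma
  assumes "d > 0"
  shows integrable_std_normal_vec_chi_square_deviation:
      "integrable (std_normal_vec_measure d) (\<lambda>x. ((\<Sum>i<d. (x i)\<^sup>2) / d - 1)\<^sup>2)"
    and integral_std_normal_vec_chi_square_deviation:
      "integral\<^sup>L (std_normal_vec_measure d) (\<lambda>x. ((\<Sum>i<d. (x i)\<^sup>2) / d - 1)\<^sup>2) = 2 / d"
proof -
  interpret prob_space std_normal_measure by (rule prob_space_std_normal_measure)
  have centered: "((\<Sum>i<d. (x i)\<^sup>2) / d - 1)\<^sup>2 = (\<Sum>i<d. (x i)\<^sup>2 - 1)\<^sup>2 / (real d)\<^sup>2" for x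
    using assms by (simp add: sum_subtractf field_simps)
  note sum_squared = product_integral_sum_centered_squared[OF finite_lessThan
      integrable_std_normal_square_minus_one integrable_std_normal_square_minus_one_squared
      integral_std_normal_square_minus_one, of d,
      unfolded integral_std_normal_square_minus_one_squared]
  show "integrable (std_normal_vec_measure d) (\<lambda>x. ((\<Sum>i<d. (x i)\<^sup>2) / d - 1)\<^sup>2)"
    unfolding centered std_normal_vec_measure_def using sum_squared by simp
  show "integral\<^sup>L (std_normal_vec_measure d) (\<lambda>x. ((\<Sum>i<d. (x i)\<^sup>2) / d - 1)\<^sup>2) = 2 / d"
    unfolding centered std_normal_vec_measure_def using sum_squared assms
    by (simp add: power2_eq_square)
qed

lemma exp_diff_le_diff_nonpos:
  fixes x y :: real
  assumes "x \<le> y" "y \<le> 0"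
  shows "exp y - exp x \<le> y - x"
proof -
  have "exp y - exp x = exp y * (1 - exp (x - y))" by (simp add: algebra_simps exp_diff)
  also have "\<dots> \<le> exp y * (y - x)"
  proof (rule mult_left_mono)
    show "1 - exp (x - y) \<le> y - x" using exp_ge_add_one_self[of "x - y"] by linarith
  qed simp
  also have "\<dots> \<le> y - x" using assms by (intro mult_left_le_one_le) auto
  finally show ?thesis .
qed

lemma abs_min_one_exp_diff_le:
  fixes a b :: real
  shows "\<bar>min 1 (exp a) - min 1 (exp b)\<bar> \<le> \<bar>a - b\<bar>"
proof -
  have min_exp: "min 1 (exp t) = exp (min 0 t)" for t :: real by (simp add: min_def)
  have "\<bar>exp (min 0 a) - exp (min 0 b)\<bar> \<le> \<bar>min 0 a - min 0 b\<bar>"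
    using exp_diff_le_diff_nonpos[of "min 0 a" "min 0 b"] exp_diff_le_diff_nonpos[of "min 0 b" "min 0 a"]
    by (cases "a \<le> b") (auto simp: min_def)
  also have "\<dots> \<le> \<bar>a - b\<bar>" by (auto simp: min_def)
  finally show ?thesis unfolding min_exp .
qed

lemma mult_le_weighted_squares:
  fixes u v \<delta> :: real
  assumes "\<delta> > 0"
  shows "u * v \<le> (\<delta> * u\<^sup>2 + v\<^sup>2 / \<delta>) / 2"
proof -
  have "0 \<le> (\<delta> * u - v)\<^sup>2 / \<delta>" using assms by simp
  also have "\<dots> = \<delta> * u\<^sup>2 - 2 * u * v + v\<^sup>2 / \<delta>"
    using assms by (simp add: power2_eq_square field_simps)
  finally show ?thesis by simp
qed

lemma (in prob_space) abs_integral_diff_min_one_exp_le: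
  fixes W Z :: "'a \<Rightarrow> real" and X :: "'a \<Rightarrow> nat \<Rightarrow> real"
  assumes [measurable]: "W \<in> borel_measurable M" "Z \<in> borel_measurable M"
    and Z_distr: "distr M lborel Z = std_normal_measure"
    and X_meas [measurable]: "(\<lambda>\<omega>. restrict (X \<omega>) {..<d}) \<in> M \<rightarrow>\<^sub>M PiM {..<d} (\<lambda>_. lborel)"
    and X_distr: "distr M (PiM {..<d} (\<lambda>_. lborel)) (\<lambda>\<omega>. restrict (X \<omega>) {..<d})
      = std_normal_vec_measure d"
    and "d > 0" "\<delta> > 0"
  shows "\<bar>(\<integral>\<omega>. Z \<omega> * min 1 (exp (W \<omega> - l\<^sup>2 * (\<Sum>i<d. (X \<omega> i)\<^sup>2) / (2 * real d))) \<partial>M)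
      - (\<integral>\<omega>. Z \<omega> * min 1 (exp (W \<omega> - l\<^sup>2 / 2)) \<partial>M)\<bar> \<le> \<delta> / 2 + l ^ 4 / (4 * \<delta> * d)"
proof -
  define Y where "Y \<omega> = (\<Sum>i<d. (X \<omega> i)\<^sup>2) / d - 1" for \<omega>
  define A where "A \<omega> = Z \<omega> * min 1 (exp (W \<omega> - l\<^sup>2 * (\<Sum>i<d. (X \<omega> i)\<^sup>2) / (2 * real d)))" for \<omega>
  define B where "B \<omega> = Z \<omega> * min 1 (exp (W \<omega> - l\<^sup>2 / 2))" for \<omega>
  define U where "U = (\<lambda>\<omega>. (\<delta> * (Z \<omega>)\<^sup>2 + (l\<^sup>2 / 2)\<^sup>2 * (Y \<omega>)\<^sup>2 / \<delta>) / 2)"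
  have "(\<lambda>x::nat \<Rightarrow> real. \<Sum>i<d. (x i)\<^sup>2) \<in> borel_measurable (PiM {..<d} (\<lambda>_. lborel))"
    by measurable
  from measurable_compose[OF X_meas this]
  have [measurable]: "(\<lambda>\<omega>. \<Sum>i<d. (X \<omega> i)\<^sup>2) \<in> borel_measurable M" by simp
  have chi_meas: "(\<lambda>x::nat \<Rightarrow> real. ((\<Sum>i<d. (x i)\<^sup>2) / d - 1)\<^sup>2)
      \<in> borel_measurable (PiM {..<d} (\<lambda>_. lborel))"
    by measurable
  have Y_integrable: "integrable M (\<lambda>\<omega>. (Y \<omega>)\<^sup>2)"
    using integrable_std_normal_vec_chi_square_deviation[OF \<open>d > 0\<close>]
    unfolding Y_def X_distr[symmetric] integrable_distr_eq[OF X_meas chi_meas] by simp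
  have Y_integral: "integral\<^sup>L M (\<lambda>\<omega>. (Y \<omega>)\<^sup>2) = 2 / d"
    using integral_std_normal_vec_chi_square_deviation[OF \<open>d > 0\<close>]
    unfolding Y_def X_distr[symmetric] integral_distr[OF X_meas chi_meas] by simp
  have Z_integrable: "integrable M (\<lambda>\<omega>. (Z \<omega>) ^ k)" for k
    using integrable_std_normal_measure_power[of k]
    unfolding Z_distr[symmetric] by (subst (asm) integrable_distr_eq) simp_all
  have Z_integral: "integral\<^sup>L M (\<lambda>\<omega>. (Z \<omega>)\<^sup>2) = 1"
    using integral_std_normal_square unfolding Z_distr[symmetric] by (subst (asm) integral_distr) simp_all
  have [measurable]: "A \<in> borel_measurable M" "B \<in> borel_measurable M"
    unfolding A_def B_def by measurable
  have A_integrable: "integrable M A"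
    using Z_integrable[of 1] by (rule Bochner_Integration.integrable_bound)
      (auto simp: A_def abs_mult intro!: mult_left_le)
  have B_integrable: "integrable M B"
    using Z_integrable[of 1] by (rule Bochner_Integration.integrable_bound)
      (auto simp: B_def abs_mult intro!: mult_left_le)
  have "integral\<^sup>L M U
      = (\<delta> * integral\<^sup>L M (\<lambda>\<omega>. (Z \<omega>)\<^sup>2) + (l\<^sup>2 / 2)\<^sup>2 * integral\<^sup>L M (\<lambda>\<omega>. (Y \<omega>)\<^sup>2) / \<delta>) / 2"
    unfolding U_def using Z_integrable[of 2] Y_integrable by simp
  also have "\<dots> = \<delta> / 2 + l ^ 4 / (4 * \<delta> * d)"
    unfolding Z_integral Y_integral using \<open>d > 0\<close> \<open>\<delta> > 0\<close>
    by (simp add: field_simps power2_eq_square power4_eq_xxxx)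
  finally have U_integral: "integral\<^sup>L M U = \<delta> / 2 + l ^ 4 / (4 * \<delta> * d)" .
  have pointwise: "\<bar>A \<omega> - B \<omega>\<bar> \<le> U \<omega>" for \<omega>
  proof -
    have exponent_diff: "(W \<omega> - l\<^sup>2 * (\<Sum>i<d. (X \<omega> i)\<^sup>2) / (2 * real d)) - (W \<omega> - l\<^sup>2 / 2)
        = - (l\<^sup>2 / 2 * Y \<omega>)"
      unfolding Y_def using \<open>d > 0\<close> by (simp add: field_simps)
    have "\<bar>A \<omega> - B \<omega>\<bar> = \<bar>Z \<omega>\<bar> * \<bar>min 1 (exp (W \<omega> - l\<^sup>2 * (\<Sum>i<d. (X \<omega> i)\<^sup>2) / (2 * real d)))
        - min 1 (exp (W \<omega> - l\<^sup>2 / 2))\<bar>"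
      unfolding A_def B_def by (simp add: abs_mult[symmetric] algebra_simps)
    also have "\<dots> \<le> \<bar>Z \<omega>\<bar> * \<bar>(W \<omega> - l\<^sup>2 * (\<Sum>i<d. (X \<omega> i)\<^sup>2) / (2 * real d)) - (W \<omega> - l\<^sup>2 / 2)\<bar>"
      by (intro mult_left_mono abs_min_one_exp_diff_le) simp
    also have "\<dots> = \<bar>Z \<omega>\<bar> * \<bar>l\<^sup>2 / 2 * Y \<omega>\<bar>"
      unfolding exponent_diff by simp
    also have "\<dots> \<le> U \<omega>"
      using mult_le_weighted_squares[OF \<open>\<delta> > 0\<close>, of "\<bar>Z \<omega>\<bar>" "\<bar>l\<^sup>2 / 2 * Y \<omega>\<bar>"]
      by (simp add: U_def power_mult_distrib power_divide)
    finally show ?thesis .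
  qed
  have "\<bar>integral\<^sup>L M A - integral\<^sup>L M B\<bar> \<le> integral\<^sup>L M (\<lambda>\<omega>. \<bar>A \<omega> - B \<omega>\<bar>)"
    using A_integrable B_integrable integral_abs_bound[of M "\<lambda>\<omega>. A \<omega> - B \<omega>"] by simp
  also have "\<dots> \<le> integral\<^sup>L M U"
    using A_integrable B_integrable Z_integrable[of 2] Y_integrable pointwise
    by (intro integral_mono) (simp_all add: U_def)
  finally show ?thesis unfolding U_integral A_def B_def .
qed

theorem lemma5:
  fixes l :: real
    and M :: "nat \<Rightarrow> 'a measure"
    and Z1 Z2 :: "nat \<Rightarrow> 'a \<Rightarrow> real"
    and Zx :: "nat \<Rightarrow> 'a \<Rightarrow> nat \<Rightarrow> real"
  assumes l_pos: "l > 0"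
    and prob: "\<And>d. d \<ge> 1 \<Longrightarrow> prob_space (M d)"
    and Z1_meas: "\<And>d. d \<ge> 1 \<Longrightarrow> Z1 d \<in> borel_measurable (M d)"
    and Z1_distr: "\<And>d. d \<ge> 1 \<Longrightarrow> distr (M d) lborel (Z1 d) = std_normal_measure"
    and Z2_meas: "\<And>d. d \<ge> 1 \<Longrightarrow> Z2 d \<in> borel_measurable (M d)"
    and Z2_distr: "\<And>d. d \<ge> 1 \<Longrightarrow> distr (M d) lborel (Z2 d) = std_normal_measure"
    and Zx_meas: "\<And>d. d \<ge> 1 \<Longrightarrow>
        (\<lambda>\<omega>. restrict (Zx d \<omega>) {..<d}) \<in> M d \<rightarrow>\<^sub>M PiM {..<d} (\<lambda>_. lborel)"
    and Zx_distr: "\<And>d. d \<ge> 1 \<Longrightarrow>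
        distr (M d) (PiM {..<d} (\<lambda>_. lborel)) (\<lambda>\<omega>. restrict (Zx d \<omega>) {..<d})
          = std_normal_vec_measure d"
  shows "\<forall>\<epsilon>>0. \<exists>N. \<forall>d\<ge>N. \<forall>\<alpha>::real. \<alpha> \<ge> 0 \<longrightarrow>
           \<bar>(\<integral>\<omega>. Z2 d \<omega> * min 1 (exp (- l * \<alpha> * Z1 d \<omega>
                 - l\<^sup>2 * (\<Sum>i<d. (Zx d \<omega> i)\<^sup>2) / (2 * real d))) \<partial>M d)
            - (\<integral>\<omega>. Z2 d \<omega> * min 1 (exp (- l * \<alpha> * Z1 d \<omega> - l\<^sup>2 / 2)) \<partial>M d)\<bar> < \<epsilon>"
proof -
  have bound: "\<bar>(\<integral>\<omega>. Z2 d \<omega> * min 1 (exp (- l * \<alpha> * Z1 d \<omega>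
                 - l\<^sup>2 * (\<Sum>i<d. (Zx d \<omega> i)\<^sup>2) / (2 * real d))) \<partial>M d)
            - (\<integral>\<omega>. Z2 d \<omega> * min 1 (exp (- l * \<alpha> * Z1 d \<omega> - l\<^sup>2 / 2)) \<partial>M d)\<bar>
        \<le> \<epsilon> / 2 + l ^ 4 / (4 * \<epsilon> * d)" if "d > 0" "\<epsilon> > 0" for d \<alpha> \<epsilon>
  proof (rule prob_space.abs_integral_diff_min_one_exp_le)
    show "(\<lambda>\<omega>. - l * \<alpha> * Z1 d \<omega>) \<in> borel_measurable (M d)"
      using Z1_meas \<open>d > 0\<close> by simp
  qed (use that prob Z2_meas Z2_distr Zx_meas Zx_distr in simp_all)
  have eventually_small:
    "\<forall>\<^sub>F d in sequentially. d > 0 \<and> \<epsilon> / 2 + l ^ 4 / (4 * \<epsilon> * real d) < \<epsilon>" if "\<epsilon> > 0" for \<epsilon>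
  proof -
    have "(\<lambda>d. l ^ 4 / (4 * \<epsilon>) / real d) \<longlonglongrightarrow> 0"
      by (rule lim_const_over_n)
    then have "\<forall>\<^sub>F d in sequentially. l ^ 4 / (4 * \<epsilon>) / real d < \<epsilon> / 2"
      by (rule order_tendstoD(2)) (simp add: \<open>\<epsilon> > 0\<close>)
    moreover have "\<forall>\<^sub>F d in sequentially. d > (0::nat)"
      by (rule eventually_gt_at_top)
    ultimately show ?thesis
      by eventually_elim (auto simp: divide_divide_eq_left)
  qed
  show ?thesis
    using bound eventually_small unfolding eventually_sequentially by (meson order.strict_trans1)
qed

end
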